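(* $\mathrm{GenSpec}\preceq F_{\mathrm{weak}}$: for all graphs $G,H$, if $F_{\mathrm{weak}}(G)=F_{\mathrm{weak}}(H)$ then $\mathrm{Spec}(G)=\mathrm{Spec}(H)$ and $\mathrm{Spec}(\overline G)=\mathrm{Spec}(\overline H)$, where $\overline G$ denotes the complement graph.
   Context: Graphs are finite, simple and undirected with adjacency matrix $A$. $\mathrm{Spec}(G)$ is the multiset of eigenvalues of $A$. Let $\mu_1<\dots<\mu_m$ be the distinct eigenvalues, $P_i$ the orthogonal projection matrix onto the eigenspace of $\mu_i$, $P_*(x,y)=(P_1(x,y),\dots,P_m(x,y))$. Fürer's weak spectral invariant is $F_{\mathrm{weak}}(G)=\big(\mathrm{Spec}(G),\{\!\{(P_*(x,x),\{\!\{P_*(x,y)\}\!\}_{y\in V(G)})\}\!\}_{x\in V(G)}\big)$, where $\{\!\{\cdot\}\!\}$ denotes a multiset. $\mathrm{GenSpec}(G)=(\mathrm{Spec}(G),\mathrm{Spec}(\overline G))$ (the generalized spectrum). *)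

theory Defs
  imports "Jordan_Normal_Form.Char_Poly" "HOL-Computational_Algebra.Polynomial"
begin

text \<open>A finite simple graph with vertex set {0..<n}, given by a symmetric irreflexive
  edge relation E (only its values on {0..<n} matter).\<close>
definition simple_graph :: "nat \<Rightarrow> (nat \<Rightarrow> nat \<Rightarrow> bool) \<Rightarrow> bool" where
  "simple_graph n E \<longleftrightarrow> (\<forall>i<n. \<forall>j<n. E i j = E j i) \<and> (\<forall>i<n. \<not> E i i)"

definition compl_graph :: "(nat \<Rightarrow> nat \<Rightarrow> bool) \<Rightarrow> nat \<Rightarrow> nat \<Rightarrow> bool" where
  "compl_graph E = (\<lambda>i j. i \<noteq> j \<and> \<not> E i j)"

definition adj_mat :: "nat \<Rightarrow> (nat \<Rightarrow> nat \<Rightarrow> bool) \<Rightarrow> real mat" where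
  "adj_mat n E = mat n n (\<lambda>(i, j). if E i j then 1 else 0)"

definition Spec :: "nat \<Rightarrow> (nat \<Rightarrow> nat \<Rightarrow> bool) \<Rightarrow> real multiset" where
  "Spec n E = proots (char_poly (adj_mat n E))"

definition eigenspace :: "real mat \<Rightarrow> real \<Rightarrow> real vec set" where
  "eigenspace A mu = {v \<in> carrier_vec (dim_row A). A *\<^sub>v v = mu \<cdot>\<^sub>v v}"

definition eig_proj :: "real mat \<Rightarrow> real \<Rightarrow> real mat" where
  "eig_proj A mu = (THE P. P \<in> carrier_mat (dim_row A) (dim_row A) \<and> P * P = P \<and>
      transpose_mat P = P \<and> (\<lambda>v. P *\<^sub>v v) ` carrier_vec (dim_row A) = eigenspace A mu)"

definition distinct_eigs :: "nat \<Rightarrow> (nat \<Rightarrow> nat \<Rightarrow> bool) \<Rightarrow> real list" where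
  "distinct_eigs n E = sorted_list_of_set (set_mset (Spec n E))"

definition Pstar :: "nat \<Rightarrow> (nat \<Rightarrow> nat \<Rightarrow> bool) \<Rightarrow> nat \<Rightarrow> nat \<Rightarrow> real list" where
  "Pstar n E x y = map (\<lambda>mu. eig_proj (adj_mat n E) mu $$ (x, y)) (distinct_eigs n E)"

definition F_weak :: "nat \<Rightarrow> (nat \<Rightarrow> nat \<Rightarrow> bool) \<Rightarrow>
    real multiset \<times> (real list \<times> real list multiset) multiset" where
  "F_weak n E = (Spec n E,
     image_mset (\<lambda>x. (Pstar n E x x, image_mset (\<lambda>y. Pstar n E x y) (mset [0..<n]))) (mset [0..<n]))"

end

(*
  The complement of a graph with adjacency matrix A has adjacency matrix J - I - A, so its
  characteristic polynomial at t is det ((t + 1) I + A - J).  By the matrix determinant lemma this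
  is det ((t + 1) I + A) * (1 - 1^T ((t + 1) I + A)^-1 1), and the spectral decomposition
  A = sum_mu mu P_mu turns the second factor into 1 - sum_mu (1^T P_mu 1) / (mu + t + 1).
  Everything here is determined by Spec A and by the entry sums 1^T P_mu 1 of the eigenprojections,
  both of which F_weak records; two polynomials agreeing at all but finitely many t are equal.

  The spectral decomposition is obtained without diagonalising: the characteristic polynomial of a
  real symmetric matrix splits over the reals, Cayley-Hamilton (via Schur triangularisation) gives
  prod_e (A - e I) = 0 over the eigenvalues with multiplicity, symmetry lets one drop repeated
  factors, and the Lagrange interpolation polynomials of the distinct eigenvalues, evaluated at A,
  are then the orthogonal projections onto the eigenspaces.
*)

theory Submission
  imports Defs "Jordan_Normal_Form.Schur_Decomposition" "Jordan_Normal_Form.Jordan_Normal_Form_Uniqueness"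
begin

section \<open>Real symmetric matrices have real eigenvalues\<close>

interpretation of_real_poly_hom: map_poly_inj_idom_hom complex_of_real ..

lemma conjugate_of_real_mat_mult_vec:
  fixes A :: "real mat" and v :: "complex vec"
  assumes "A \<in> carrier_mat n n" and "v \<in> carrier_vec n"
  shows "conjugate (map_mat complex_of_real A *\<^sub>v v) = map_mat complex_of_real A *\<^sub>v conjugate v"
  using assms by (intro eq_vecI) (auto simp: scalar_prod_def sum_conjugate)

lemma real_symmetric_eigenvalue_real:
  fixes A :: "real mat" and a :: complex
  assumes A: "A \<in> carrier_mat n n" and sym: "transpose_mat A = A"
    and ev: "eigenvalue (map_mat complex_of_real A) a"
  shows "a \<in> \<real>"
proof -
  let ?Ac = "map_mat complex_of_real A"
  have Ac: "?Ac \<in> carrier_mat n n" and symc: "transpose_mat ?Ac = ?Ac"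
    using A sym by (auto simp: map_mat_transpose)
  obtain v where v: "v \<in> carrier_vec n" "v \<noteq> 0\<^sub>v n" and Av: "?Ac *\<^sub>v v = a \<cdot>\<^sub>v v"
    using ev Ac unfolding eigenvalue_def eigenvector_def by auto
  have "a * (v \<bullet>c v) = (?Ac *\<^sub>v v) \<bullet>c v"
    using v by (simp add: Av)
  also have "\<dots> = (transpose_mat ?Ac *\<^sub>v v) \<bullet> conjugate v"
    by (simp add: symc)
  also have "\<dots> = v \<bullet> conjugate (?Ac *\<^sub>v v)"
    using v Ac by (simp add: transpose_vec_mult_scalar conjugate_of_real_mat_mult_vec[OF A])
  also have "\<dots> = cnj a * (v \<bullet>c v)"
    using v by (simp add: Av conjugate_smult_vec)
  finally have "a = cnj a"
    using v by simp
  thus ?thesis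
    by (simp add: Reals_cnj_iff)
qed

lemma char_poly_real_symmetric_splits:
  fixes A :: "real mat"
  assumes A: "A \<in> carrier_mat n n" and sym: "transpose_mat A = A"
  obtains es where "char_poly A = (\<Prod>e\<leftarrow>es. [:-e, 1:])"
proof -
  let ?Ac = "map_mat complex_of_real A"
  have Ac: "?Ac \<in> carrier_mat n n" using A by simp
  obtain as where as: "char_poly ?Ac = (\<Prod>a\<leftarrow>as. [:-a, 1:])"
    using char_poly_factorized[OF Ac] by blast
  have "a \<in> \<real>" if "a \<in> set as" for a
  proof (rule real_symmetric_eigenvalue_real[OF A sym])
    have "poly (char_poly ?Ac) a = 0"
      using that by (simp add: as poly_prod_list prod_list_zero_iff)
    thus "eigenvalue ?Ac a" using eigenvalue_root_char_poly[OF Ac] by simp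
  qed
  hence re: "map (complex_of_real \<circ> Re) as = as"
    by (induction as) auto
  have "map_poly complex_of_real (\<Prod>e\<leftarrow>map Re as. [:-e, 1:]) = (\<Prod>a\<leftarrow>map (complex_of_real \<circ> Re) as. [:-a, 1:])"
    by (simp add: of_real_poly_hom.hom_prod_list o_def)
  also have "\<dots> = map_poly complex_of_real (char_poly A)"
    unfolding re as[symmetric] by (rule of_real_hom.char_poly_hom[OF A])
  finally show thesis
    by (intro that[of "map Re as"]) simp
qed

section \<open>Products of the matrices A - e I and Cayley-Hamilton\<close>

lemma mat_eq_by_mult_vec:
  fixes A B :: "'a :: comm_ring_1 mat"
  assumes "A \<in> carrier_mat n m" and "B \<in> carrier_mat n m"
    and "\<And>v. v \<in> carrier_vec m \<Longrightarrow> A *\<^sub>v v = B *\<^sub>v v"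
  shows "A = B"
proof (rule eq_matI)
  fix i j assume "i < dim_row B" and "j < dim_col B"
  have "(A *\<^sub>v unit_vec m j) $ i = (B *\<^sub>v unit_vec m j) $ i"
    using assms(3) by simp
  with assms(1,2) \<open>i < dim_row B\<close> \<open>j < dim_col B\<close> show "A $$ (i, j) = B $$ (i, j)"
    by simp
qed (use assms in auto)

lemma smult_mat_mult_vec:
  fixes M :: "'a :: comm_semiring_0 mat"
  shows "M \<in> carrier_mat n m \<Longrightarrow> v \<in> carrier_vec m \<Longrightarrow> (k \<cdot>\<^sub>m M) *\<^sub>v v = k \<cdot>\<^sub>v (M *\<^sub>v v)"
  by (intro eq_vecI) auto

lemma zero_mat_mult_vec[simp]: "v \<in> carrier_vec m \<Longrightarrow> 0\<^sub>m n m *\<^sub>v v = (0\<^sub>v n :: 'a :: semiring_0 vec)"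
  by (intro eq_vecI) (auto simp: scalar_prod_def)

(* Since char_matrix A e = A - e I, this is the polynomial prod_e (x - e) evaluated at A. *)
fun char_matrix_prod :: "'a :: field mat \<Rightarrow> 'a list \<Rightarrow> 'a mat" where
  "char_matrix_prod A [] = 1\<^sub>m (dim_row A)"
| "char_matrix_prod A (e # es) = char_matrix A e * char_matrix_prod A es"

context
  fixes A :: "'a :: field mat" and n :: nat
  assumes A: "A \<in> carrier_mat n n"
begin

lemma dim_char_matrix[simp]: "dim_row (char_matrix A e) = n" "dim_col (char_matrix A e) = n"
  using A by (auto simp: char_matrix_def)

lemma char_matrix_prod_carrier[simp]: "char_matrix_prod A es \<in> carrier_mat n n"
  using A by (induction es) (auto intro: mult_carrier_mat[of _ n n _ n])

lemma dim_char_matrix_prod[simp]: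
  "dim_row (char_matrix_prod A es) = n" "dim_col (char_matrix_prod A es) = n"
  using char_matrix_prod_carrier[of es] by (simp_all only: carrier_matD)

lemma char_matrix_mult_vec: "v \<in> carrier_vec n \<Longrightarrow> char_matrix A e *\<^sub>v v = A *\<^sub>v v - e \<cdot>\<^sub>v v"
  using A by (auto simp: char_matrix_def add_mult_distrib_mat_vec[of _ n n] vec_eq_iff)

lemma char_matrix_mult_vec_eq_0_iff:
  "v \<in> carrier_vec n \<Longrightarrow> char_matrix A e *\<^sub>v v = 0\<^sub>v n \<longleftrightarrow> A *\<^sub>v v = e \<cdot>\<^sub>v v"
  using A by (auto simp: char_matrix_mult_vec vec_eq_iff)

lemma commute_char_matrix:
  assumes X: "X \<in> carrier_mat n n" and XA: "X * A = A * X"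
  shows "X * char_matrix A e = char_matrix A e * X"
proof -
  have "X * char_matrix A e = X * A + (-e) \<cdot>\<^sub>m X"
    using A X by (simp add: char_matrix_def mult_add_distrib_mat mult_smult_distrib[OF X one_carrier_mat])
  also have "\<dots> = A * X + (-e) \<cdot>\<^sub>m X"
    by (simp add: XA)
  also have "\<dots> = char_matrix A e * X"
    using A X by (simp add: char_matrix_def add_mult_distrib_mat mult_smult_assoc_mat[OF one_carrier_mat X])
  finally show ?thesis .
qed

lemma char_matrix_commute: "char_matrix A e * A = A * char_matrix A e"
  using commute_char_matrix[OF A refl] by simp

lemma char_matrix_prod_commute: "char_matrix_prod A es * A = A * char_matrix_prod A es"
proof (induction es)
  case (Cons e es)
  have "char_matrix_prod A (e # es) * A = char_matrix A e * (char_matrix_prod A es * A)"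
    using A by (simp add: assoc_mult_mat[of _ n n _ n _ n])
  also have "\<dots> = (char_matrix A e * A) * char_matrix_prod A es"
    unfolding Cons.IH using A by (simp add: assoc_mult_mat[of _ n n _ n _ n])
  also have "\<dots> = (A * char_matrix A e) * char_matrix_prod A es"
    using char_matrix_commute by simp
  also have "\<dots> = A * char_matrix_prod A (e # es)"
    using A by (simp add: assoc_mult_mat[of _ n n _ n _ n])
  finally show ?case .
qed (use A in simp)

lemma char_matrix_char_matrix_prod_commute:
  "char_matrix A e * char_matrix_prod A es = char_matrix_prod A es * char_matrix A e"
  using commute_char_matrix[OF char_matrix_prod_carrier char_matrix_prod_commute] by simp

lemma char_matrix_prod_remove1:
  "e \<in> set es \<Longrightarrow> char_matrix_prod A es = char_matrix A e * char_matrix_prod A (remove1 e es)"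
proof (induction es)
  case (Cons x es)
  show ?case
  proof (cases "x = e")
    case False
    have "char_matrix_prod A (x # es) = (char_matrix A x * char_matrix A e) * char_matrix_prod A (remove1 e es)"
      using Cons False A by (simp add: assoc_mult_mat[of _ n n _ n _ n])
    also have "\<dots> = (char_matrix A e * char_matrix A x) * char_matrix_prod A (remove1 e es)"
      using commute_char_matrix[OF char_matrix_closed[OF A] char_matrix_commute] by simp
    finally show ?thesis
      using False A by (simp add: assoc_mult_mat[of _ n n _ n _ n])
  qed simp
qed simp

lemma char_matrix_prod_mset_eq:
  "mset es = mset es' \<Longrightarrow> char_matrix_prod A es = char_matrix_prod A es'"
proof (induction es arbitrary: es')
  case (Cons e es)
  hence e: "e \<in> set es'"
    by (metis list.set_intros(1) set_mset_mset)
  from Cons.prems have "mset es' - {#e#} = mset es"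
    by (metis add_mset_remove_trivial mset.simps(2))
  hence "mset es = mset (remove1 e es')"
    by simp
  from Cons.IH[OF this] show ?case
    using char_matrix_prod_remove1[OF e] by simp
qed simp

lemma char_matrix_prod_eigenvector:
  assumes v: "v \<in> carrier_vec n" and ev: "A *\<^sub>v v = mu \<cdot>\<^sub>v v"
  shows "char_matrix_prod A es *\<^sub>v v = (\<Prod>e\<leftarrow>es. mu - e) \<cdot>\<^sub>v v"
proof (induction es)
  case (Cons e es)
  have "char_matrix_prod A (e # es) *\<^sub>v v = char_matrix A e *\<^sub>v ((\<Prod>e\<leftarrow>es. mu - e) \<cdot>\<^sub>v v)"
    using A v by (simp add: Cons.IH[symmetric] assoc_mult_mat_vec[of _ n n _ n])
  also have "\<dots> = (\<Prod>e\<leftarrow>es. mu - e) \<cdot>\<^sub>v (char_matrix A e *\<^sub>v v)"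
    using v by (intro eq_vecI) auto
  also have "char_matrix A e *\<^sub>v v = (mu - e) \<cdot>\<^sub>v v"
    using v by (simp add: char_matrix_mult_vec ev vec_eq_iff algebra_simps)
  finally show ?case
    using v by (simp add: smult_smult_assoc mult.commute)
qed (use A v in simp)

lemma char_matrix_prod_Cons_mult_vec:
  assumes v: "v \<in> carrier_vec n"
  shows "char_matrix_prod A (e # es) *\<^sub>v v = char_matrix A e *\<^sub>v (char_matrix_prod A es *\<^sub>v v)"
    and "char_matrix_prod A (e # es) *\<^sub>v v = char_matrix_prod A es *\<^sub>v (char_matrix A e *\<^sub>v v)"
proof -
  show "char_matrix_prod A (e # es) *\<^sub>v v = char_matrix A e *\<^sub>v (char_matrix_prod A es *\<^sub>v v)"
    using A v by (simp add: assoc_mult_mat_vec[of _ n n _ n])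
  also have "\<dots> = (char_matrix_prod A es * char_matrix A e) *\<^sub>v v"
    using A v char_matrix_char_matrix_prod_commute by (simp add: assoc_mult_mat_vec[of _ n n _ n, symmetric])
  finally show "char_matrix_prod A (e # es) *\<^sub>v v = char_matrix_prod A es *\<^sub>v (char_matrix A e *\<^sub>v v)"
    using A v by (simp add: assoc_mult_mat_vec[of _ n n _ n])
qed

lemma eq_0_if_char_matrix_prod_remove1_eq_0:
  assumes "distinct es" and "w \<in> carrier_vec n" and "char_matrix_prod A es *\<^sub>v w = 0\<^sub>v n"
    and "\<And>e. e \<in> set es \<Longrightarrow> char_matrix_prod A (remove1 e es) *\<^sub>v w = 0\<^sub>v n"
  shows "w = 0\<^sub>v n"
  using assms
proof (induction es arbitrary: w)
  case (Cons mu es)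
  note split = char_matrix_prod_Cons_mult_vec(2)[OF Cons.prems(2)]
  let ?u = "char_matrix A mu *\<^sub>v w"
  have "?u = 0\<^sub>v n"
  proof (rule Cons.IH)
    show "?u \<in> carrier_vec n"
      using A Cons.prems(2) by (simp add: mult_mat_vec_carrier[of _ n n])
    show "char_matrix_prod A es *\<^sub>v ?u = 0\<^sub>v n"
      using Cons.prems(3) split by simp
    fix e assume e: "e \<in> set es"
    with Cons.prems(1) have "remove1 e (mu # es) = mu # remove1 e es"
      by auto
    with Cons.prems(4)[of e] e show "char_matrix_prod A (remove1 e es) *\<^sub>v ?u = 0\<^sub>v n"
      using char_matrix_prod_Cons_mult_vec(2)[OF Cons.prems(2)] by simp
  qed (use Cons.prems(1) in simp)
  hence "char_matrix_prod A es *\<^sub>v w = (\<Prod>e\<leftarrow>es. mu - e) \<cdot>\<^sub>v w"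
    using Cons.prems(2) by (simp add: char_matrix_prod_eigenvector char_matrix_mult_vec_eq_0_iff)
  moreover have "char_matrix_prod A es *\<^sub>v w = 0\<^sub>v n"
    using Cons.prems(4)[of mu] by simp
  moreover have "(\<Prod>e\<leftarrow>es. mu - e) \<noteq> 0"
    using Cons.prems(1) by (auto simp: prod_list_zero_iff)
  ultimately show ?case
    using Cons.prems(2) by (auto simp: vec_eq_iff)
qed (use A in simp)

lemma char_matrix_prod_snoc:
  "char_matrix_prod A (es @ [e]) = char_matrix_prod A es * char_matrix A e"
proof (induction es)
  case (Cons x es)
  then show ?case
    using A by (simp add: assoc_mult_mat[symmetric, of "char_matrix A x" n n _ n _ n])
qed (use A in \<open>simp add: left_mult_one_mat[OF char_matrix_closed[OF A]] right_mult_one_mat[OF char_matrix_closed[OF A]]\<close>)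

end

lemma det_char_matrix:
  fixes A :: "'a :: field mat"
  assumes A: "A \<in> carrier_mat n n"
  shows "det (char_matrix A e) = (-1) ^ n * poly (char_poly A) e"
proof -
  have "- char_matrix A e = (-1) \<cdot>\<^sub>m char_matrix A e"
    using A by (intro eq_matI) auto
  hence "poly (char_poly A) e = (-1) ^ n * det (char_matrix A e)"
    using A by (simp add: char_poly_matrix[OF A])
  thus ?thesis
    by (simp flip: power_mult_distrib)
qed

lemma similar_mat_wit_mult:
  assumes wit: "similar_mat_wit A B P Q" and wit': "similar_mat_wit A' B' P Q"
  shows "similar_mat_wit (A * A') (B * B') P Q"
proof -
  define n where "n = dim_row A"
  from similar_mat_witD[OF n_def wit] have B: "B \<in> carrier_mat n n"
    and P: "P \<in> carrier_mat n n" and Q: "Q \<in> carrier_mat n n"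
    and PQ: "P * Q = 1\<^sub>m n" and QP: "Q * P = 1\<^sub>m n" and AB: "A = P * B * Q"
    by auto
  define n' where "n' = dim_row A'"
  from similar_mat_witD[OF n'_def wit'] have "P \<in> carrier_mat n' n'" and B': "B' \<in> carrier_mat n' n'"
    and A'B': "A' = P * B' * Q"
    by auto
  with P have B': "B' \<in> carrier_mat n n"
    by auto
  have "A * A' = P * B * (Q * P) * B' * Q"
    unfolding AB A'B' using B B' P Q by (simp add: assoc_mult_mat[of _ n n _ n _ n])
  also have "\<dots> = P * (B * B') * Q"
    using B B' P Q by (simp add: QP assoc_mult_mat[of _ n n _ n _ n])
  finally show ?thesis
    using B B' P Q PQ QP by (intro similar_mat_witI[of _ _ n]) auto
qed

lemma similar_mat_wit_char_matrix_prod: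
  assumes wit: "similar_mat_wit A B P Q"
  shows "similar_mat_wit (char_matrix_prod A es) (char_matrix_prod B es) P Q"
proof (induction es)
  case Nil
  define n where "n = dim_row A"
  from similar_mat_witD[OF n_def wit] have "B \<in> carrier_mat n n" "P \<in> carrier_mat n n"
    "Q \<in> carrier_mat n n" "P * Q = 1\<^sub>m n" "Q * P = 1\<^sub>m n"
    by auto
  moreover have "dim_row A = n"
    by (simp add: n_def)
  ultimately show ?case
    by (intro similar_mat_witI[of _ _ n]) auto
next
  case (Cons e es)
  then show ?case
    using similar_mat_wit_mult[OF similar_mat_wit_char_matrix[OF wit] Cons.IH] by simp
qed

lemma upper_triangular_char_matrix_shrinks_support:
  fixes B :: "'a :: field mat"
  assumes B: "B \<in> carrier_mat n n" and ut: "upper_triangular B" and v: "v \<in> carrier_vec n"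
    and tail: "\<And>j. k < j \<Longrightarrow> j < n \<Longrightarrow> v $ j = 0" and j: "k \<le> j" "j < n"
  shows "(char_matrix B (B $$ (k, k)) *\<^sub>v v) $ j = 0"
proof -
  have "char_matrix B (B $$ (k, k)) $$ (j, l) * v $ l = 0" if "l < n" for l
    using B ut that j tail[of l]
    by (cases "l < j"; cases "j = k") (auto simp: char_matrix_def upper_triangular_def)
  thus ?thesis
    using B v j by (simp add: scalar_prod_def sum.neutral)
qed

lemma upper_triangular_char_matrix_prod_diag:
  fixes B :: "'a :: field mat"
  assumes B: "B \<in> carrier_mat n n" and ut: "upper_triangular B"
  shows "char_matrix_prod B (diag_mat B) = 0\<^sub>m n n"
proof -
  let ?es = "diag_mat B"
  have take_Suc: "take (Suc k) ?es = take k ?es @ [B $$ (k, k)]" if "k < n" for k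
    using B that by (simp add: diag_mat_def take_Suc_conv_app_nth)
  have "char_matrix_prod B (take k ?es) *\<^sub>v v = 0\<^sub>v n"
    if "k \<le> n" "v \<in> carrier_vec n" "\<And>j. k \<le> j \<Longrightarrow> j < n \<Longrightarrow> v $ j = 0" for k v
    using that
  proof (induction k arbitrary: v)
    case 0
    hence "v = 0\<^sub>v n" by (intro eq_vecI) auto
    thus ?case using B by simp
  next
    case (Suc k)
    let ?w = "char_matrix B (B $$ (k, k)) *\<^sub>v v"
    have "?w \<in> carrier_vec n"
      using B Suc.prems(2) by (simp add: mult_mat_vec_carrier[of _ n n])
    moreover have "?w $ j = 0" if "k \<le> j" "j < n" for j
      using upper_triangular_char_matrix_shrinks_support[OF B ut Suc.prems(2)] Suc.prems that by auto
    ultimately have "char_matrix_prod B (take k ?es) *\<^sub>v ?w = 0\<^sub>v n"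
      using Suc.IH Suc.prems(1) by simp
    thus ?case
      using B Suc.prems by (simp add: take_Suc char_matrix_prod_snoc assoc_mult_mat_vec[of _ n n _ n])
  qed
  from this[of n] B show ?thesis
    by (intro mat_eq_by_mult_vec[of _ n n]) (auto simp: diag_mat_def)
qed

theorem cayley_hamilton_split:
  fixes A :: "'a :: conjugatable_ordered_field mat"
  assumes A: "A \<in> carrier_mat n n" and cp: "char_poly A = (\<Prod>e\<leftarrow>es. [:-e, 1:])"
  shows "char_matrix_prod A es = 0\<^sub>m n n"
proof -
  obtain B P Q where "schur_decomposition A es = (B, P, Q)"
    by (cases "schur_decomposition A es") auto
  from schur_decomposition[OF A cp this] have wit: "similar_mat_wit A B P Q"
    and ut: "upper_triangular B" and diag: "diag_mat B = es"
    by auto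
  from similar_mat_witD2[OF A wit] have B: "B \<in> carrier_mat n n" and P: "P \<in> carrier_mat n n"
    and Q: "Q \<in> carrier_mat n n"
    by auto
  from similar_mat_wit_char_matrix_prod[OF wit]
  have prod: "char_matrix_prod A es = P * char_matrix_prod B es * Q"
    unfolding similar_mat_wit_def Let_def by blast
  show ?thesis
    using upper_triangular_char_matrix_prod_diag[OF B ut] P Q by (simp add: prod diag)
qed

section \<open>Symmetric matrices are annihilated by their distinct eigenvalues\<close>

context
  fixes A :: "real mat" and n :: nat
  assumes A: "A \<in> carrier_mat n n" and sym: "transpose_mat A = A"
begin

lemma symmetric_index: "i < n \<Longrightarrow> j < n \<Longrightarrow> A $$ (j, i) = A $$ (i, j)"
  using A sym by (metis carrier_matD(1,2) index_transpose_mat(1))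

lemma transpose_char_matrix: "transpose_mat (char_matrix A e) = char_matrix A e"
  using A by (intro eq_matI) (auto simp: char_matrix_def symmetric_index)

lemma transpose_char_matrix_prod: "transpose_mat (char_matrix_prod A es) = char_matrix_prod A es"
proof (induction es)
  case (Cons e es)
  have "transpose_mat (char_matrix_prod A (e # es)) = char_matrix_prod A es * char_matrix A e"
    using A by (simp add: transpose_mult[of _ n n _ n] Cons.IH transpose_char_matrix)
  thus ?case
    using char_matrix_char_matrix_prod_commute[OF A] by simp
qed (use A in simp)

lemma char_matrix_square_kernel:
  assumes v: "v \<in> carrier_vec n" and z: "char_matrix A e *\<^sub>v (char_matrix A e *\<^sub>v v) = 0\<^sub>v n"
  shows "char_matrix A e *\<^sub>v v = 0\<^sub>v n"
proof -
  let ?w = "char_matrix A e *\<^sub>v v"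
  have w: "?w \<in> carrier_vec n"
    using A v by (simp add: mult_mat_vec_carrier[of _ n n])
  have "?w \<bullet> ?w = (transpose_mat (char_matrix A e) *\<^sub>v ?w) \<bullet> v"
    using transpose_vec_mult_scalar[OF char_matrix_closed[OF A] v w] by simp
  also have "\<dots> = 0"
    using v by (simp add: transpose_char_matrix z)
  finally show ?thesis
    using conjugate_square_eq_0_vec[OF w] by simp
qed

lemma char_matrix_prod_remdups_mult_vec:
  assumes "v \<in> carrier_vec n" and "char_matrix_prod A es *\<^sub>v v = 0\<^sub>v n"
  shows "char_matrix_prod A (remdups es) *\<^sub>v v = 0\<^sub>v n"
  using assms
proof (induction es arbitrary: v)
  case (Cons e es)
  note split = char_matrix_prod_Cons_mult_vec[OF A]
  show ?case
  proof (cases "e \<in> set es")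
    case True
    let ?u = "char_matrix_prod A (remove1 e es) *\<^sub>v v"
    have "char_matrix_prod A es *\<^sub>v v = char_matrix A e *\<^sub>v ?u"
      using split(1)[OF Cons.prems(1)] char_matrix_prod_remove1[OF A True] by simp
    moreover have "char_matrix A e *\<^sub>v (char_matrix A e *\<^sub>v ?u) = 0\<^sub>v n"
      using Cons.prems split(1) calculation by simp
    ultimately have "char_matrix_prod A es *\<^sub>v v = 0\<^sub>v n"
      using char_matrix_square_kernel A Cons.prems(1) by (simp add: mult_mat_vec_carrier[of _ n n])
    with Cons.IH Cons.prems(1) True show ?thesis
      by simp
  next
    case False
    let ?w = "char_matrix A e *\<^sub>v v"
    have w: "?w \<in> carrier_vec n"
      using A Cons.prems(1) by (simp add: mult_mat_vec_carrier[of _ n n])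
    have "char_matrix_prod A es *\<^sub>v ?w = 0\<^sub>v n"
      using Cons.prems split(2) by simp
    with Cons.IH[OF w] False show ?thesis
      using split(2)[OF Cons.prems(1)] by simp
  qed
qed simp

lemma char_matrix_prod_distinct_roots:
  assumes cp: "char_poly A = (\<Prod>e\<leftarrow>es. [:-e, 1:])"
  shows "char_matrix_prod A (sorted_list_of_set (set es)) = 0\<^sub>m n n"
proof -
  have "mset (sorted_list_of_set (set es)) = mset (remdups es)"
    by (simp flip: set_eq_iff_mset_eq_distinct)
  hence "char_matrix_prod A (sorted_list_of_set (set es)) = char_matrix_prod A (remdups es)"
    by (rule char_matrix_prod_mset_eq[OF A])
  also have "\<dots> = 0\<^sub>m n n"
  proof (rule mat_eq_by_mult_vec[of _ n n])
    fix v :: "real vec" assume v: "v \<in> carrier_vec n"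
    have "char_matrix_prod A es *\<^sub>v v = 0\<^sub>v n"
      using v by (simp add: cayley_hamilton_split[OF A cp])
    with v show "char_matrix_prod A (remdups es) *\<^sub>v v = 0\<^sub>m n n *\<^sub>v v"
      by (simp add: char_matrix_prod_remdups_mult_vec)
  qed (use A in auto)
  finally show ?thesis .
qed

end

section \<open>The matrix determinant lemma\<close>

lemma det_one_minus_mult_swap:
  fixes X :: "'a :: idom mat"
  assumes X: "X \<in> carrier_mat n k" and Y: "Y \<in> carrier_mat k n"
  shows "det (1\<^sub>m n - X * Y) = det (1\<^sub>m k - Y * X)"
proof -
  let ?K = "four_block_mat (1\<^sub>m n) X Y (1\<^sub>m k)"
  let ?L1 = "four_block_mat (1\<^sub>m n) X (0\<^sub>m k n) (1\<^sub>m k)"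
  let ?R1 = "four_block_mat (1\<^sub>m n - X * Y) (0\<^sub>m n k) Y (1\<^sub>m k)"
  let ?L2 = "four_block_mat (1\<^sub>m n) (0\<^sub>m n k) Y (1\<^sub>m k)"
  let ?R2 = "four_block_mat (1\<^sub>m n) X (0\<^sub>m k n) (1\<^sub>m k - Y * X)"
  have XY: "X * Y \<in> carrier_mat n n" and YX: "Y * X \<in> carrier_mat k k"
    using X Y by auto
  have "?L1 * ?R1 = four_block_mat (1\<^sub>m n * (1\<^sub>m n - X * Y) + X * Y) (1\<^sub>m n * 0\<^sub>m n k + X * 1\<^sub>m k)
      (0\<^sub>m k n * (1\<^sub>m n - X * Y) + 1\<^sub>m k * Y) (0\<^sub>m k n * 0\<^sub>m n k + 1\<^sub>m k * 1\<^sub>m k)"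
    using X Y XY by (intro mult_four_block_mat) auto
  also have "\<dots> = ?K"
    using X Y XY by (intro arg_cong4[of _ _ _ _ _ _ _ _ four_block_mat] eq_matI) auto
  finally have K1: "?L1 * ?R1 = ?K" .
  have "?L2 * ?R2 = four_block_mat (1\<^sub>m n * 1\<^sub>m n + 0\<^sub>m n k * 0\<^sub>m k n) (1\<^sub>m n * X + 0\<^sub>m n k * (1\<^sub>m k - Y * X))
      (Y * 1\<^sub>m n + 1\<^sub>m k * 0\<^sub>m k n) (Y * X + 1\<^sub>m k * (1\<^sub>m k - Y * X))"
    using X Y YX by (intro mult_four_block_mat) auto
  also have "\<dots> = ?K"
    using X Y YX by (intro arg_cong4[of _ _ _ _ _ _ _ _ four_block_mat] eq_matI) auto
  finally have K2: "?L2 * ?R2 = ?K" .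
  have L1: "?L1 \<in> carrier_mat (n + k) (n + k)" and R1: "?R1 \<in> carrier_mat (n + k) (n + k)"
    and L2: "?L2 \<in> carrier_mat (n + k) (n + k)" and R2: "?R2 \<in> carrier_mat (n + k) (n + k)"
    using XY YX by (auto intro!: four_block_carrier_mat simp: minus_carrier_mat)
  have "det ?L1 = 1" and "det ?R1 = det (1\<^sub>m n - X * Y)"
    using det_four_block_mat_lower_left_zero[OF one_carrier_mat X refl one_carrier_mat]
      det_four_block_mat_upper_right_zero[OF _ refl Y one_carrier_mat, of "1\<^sub>m n - X * Y"] XY
    by (auto simp: minus_carrier_mat)
  hence "det (1\<^sub>m n - X * Y) = det ?L1 * det ?R1"
    by simp
  also have "\<dots> = det ?K"
    by (simp add: K1[symmetric] det_mult[OF L1 R1])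
  also have "\<dots> = det ?L2 * det ?R2"
    by (simp add: K2[symmetric] det_mult[OF L2 R2])
  also have "\<dots> = det (1\<^sub>m k - Y * X)"
    using det_four_block_mat_upper_right_zero[OF one_carrier_mat refl Y one_carrier_mat]
      det_four_block_mat_lower_left_zero[OF one_carrier_mat X refl, of "1\<^sub>m k - Y * X"] YX
    by (auto simp: minus_carrier_mat)
  finally show ?thesis .
qed

lemma det_minus_all_ones_mat:
  fixes M R :: "'a :: idom mat"
  assumes M: "M \<in> carrier_mat n n" and R: "R \<in> carrier_mat n n" and MR: "M * R = 1\<^sub>m n"
  shows "det (M - mat n n (\<lambda>_. 1)) = det M * (1 - sum_mat R)"
proof -
  let ?J = "mat n n (\<lambda>_. 1) :: 'a mat"
  define X where "X = mat n 1 (\<lambda>(i, _). \<Sum>j<n. R $$ (i, j))"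
  define Y where "Y = (mat 1 n (\<lambda>_. 1) :: 'a mat)"
  have X: "X \<in> carrier_mat n 1" and Y: "Y \<in> carrier_mat 1 n"
    by (simp_all add: X_def Y_def)
  have "M * (1\<^sub>m n - R * ?J) = M - (M * R) * ?J"
    using M R mult_minus_distrib_mat[OF M one_carrier_mat, of "R * ?J"]
    by (simp add: assoc_mult_mat[of _ n n _ n _ n])
  moreover have "R * ?J = X * Y"
    using R by (intro eq_matI) (auto simp: X_def Y_def scalar_prod_def lessThan_atLeast0)
  ultimately have "M - ?J = M * (1\<^sub>m n - X * Y)"
    using M MR by simp
  hence "det (M - ?J) = det M * det (1\<^sub>m n - X * Y)"
    using M X Y by (simp add: det_mult[of _ n] minus_carrier_mat)
  also have "det (1\<^sub>m n - X * Y) = det (1\<^sub>m 1 - Y * X)"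
    by (rule det_one_minus_mult_swap[OF X Y])
  also have "\<dots> = (1\<^sub>m 1 - Y * X) $$ (0, 0)"
    using X Y by (simp add: det_single minus_carrier_mat)
  also have "\<dots> = 1 - (\<Sum>i<n. \<Sum>j<n. R $$ (i, j))"
    by (simp add: X_def Y_def scalar_prod_def lessThan_atLeast0)
  also have "(\<Sum>i<n. \<Sum>j<n. R $$ (i, j)) = sum_mat R"
    using R by (simp add: sum_mat_def sum.cartesian_product lessThan_atLeast0 case_prod_beta')
  finally show ?thesis .
qed

section \<open>Eigenprojections of a symmetric matrix\<close>

definition mat_sum :: "nat \<Rightarrow> 'b set \<Rightarrow> ('b \<Rightarrow> 'a :: comm_monoid_add mat) \<Rightarrow> 'a mat" where
  "mat_sum n S F = mat n n (\<lambda>(i, j). \<Sum>x\<in>S. F x $$ (i, j))"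

lemma mat_sum_carrier[simp]: "mat_sum n S F \<in> carrier_mat n n"
  by (simp add: mat_sum_def)

lemma dim_mat_sum[simp]: "dim_row (mat_sum n S F) = n" "dim_col (mat_sum n S F) = n"
  by (simp_all add: mat_sum_def)

lemma index_mat_sum[simp]: "i < n \<Longrightarrow> j < n \<Longrightarrow> mat_sum n S F $$ (i, j) = (\<Sum>x\<in>S. F x $$ (i, j))"
  by (simp add: mat_sum_def)

lemma mat_sum_cong: "(\<And>x. x \<in> S \<Longrightarrow> F x = G x) \<Longrightarrow> mat_sum n S F = mat_sum n S G"
  unfolding mat_sum_def by (intro cong_mat refl) (auto intro!: sum.cong)

lemma mult_mat_sum:
  fixes X :: "'a :: comm_semiring_0 mat"
  assumes X: "X \<in> carrier_mat n n" and F: "\<And>x. x \<in> S \<Longrightarrow> F x \<in> carrier_mat n n"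
  shows "X * mat_sum n S F = mat_sum n S (\<lambda>x. X * F x)"
proof (rule eq_matI)
  fix i j assume "i < dim_row (mat_sum n S (\<lambda>x. X * F x))" "j < dim_col (mat_sum n S (\<lambda>x. X * F x))"
  hence i: "i < n" and j: "j < n" by auto
  have "(X * mat_sum n S F) $$ (i, j) = (\<Sum>k<n. X $$ (i, k) * (\<Sum>x\<in>S. F x $$ (k, j)))"
    using X i j by (simp add: mat_sum_def scalar_prod_def lessThan_atLeast0)
  also have "\<dots> = (\<Sum>x\<in>S. \<Sum>k<n. X $$ (i, k) * F x $$ (k, j))"
    by (simp add: sum_distrib_left sum.swap[of _ S])
  also have "\<dots> = (\<Sum>x\<in>S. (X * F x) $$ (i, j))"
  proof (rule sum.cong[OF refl])
    fix x assume "x \<in> S"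
    with F have "F x \<in> carrier_mat n n" .
    with X i j show "(\<Sum>k<n. X $$ (i, k) * F x $$ (k, j)) = (X * F x) $$ (i, j)"
      by (simp add: scalar_prod_def lessThan_atLeast0)
  qed
  finally show "(X * mat_sum n S F) $$ (i, j) = mat_sum n S (\<lambda>x. X * F x) $$ (i, j)"
    using i j by (simp add: mat_sum_def)
qed (use X in auto)

lemma mat_sum_delta:
  assumes "finite S" and "y \<in> S" and "G \<in> carrier_mat n n"
  shows "mat_sum n S (\<lambda>x. if x = y then G else 0\<^sub>m n n) = G"
proof (rule eq_matI)
  fix i j assume "i < dim_row G" "j < dim_col G"
  with assms have i: "i < n" and j: "j < n"
    by auto
  hence "mat_sum n S (\<lambda>x. if x = y then G else 0\<^sub>m n n) $$ (i, j)
      = (\<Sum>x\<in>S. if x = y then G $$ (i, j) else 0)"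
    using i j by (simp add: if_distrib[of "\<lambda>M. M $$ (i, j)"] cong: if_cong)
  with assms show "mat_sum n S (\<lambda>x. if x = y then G else 0\<^sub>m n n) $$ (i, j) = G $$ (i, j)"
    by simp
qed (use assms in auto)

lemma sum_mat_mat_sum:
  assumes "finite S" and "\<And>x. x \<in> S \<Longrightarrow> F x \<in> carrier_mat n n"
  shows "sum_mat (mat_sum n S F) = (\<Sum>x\<in>S. sum_mat (F x))"
proof -
  have "sum_mat (mat_sum n S F) = (\<Sum>ij\<in>{0..<n} \<times> {0..<n}. \<Sum>x\<in>S. F x $$ ij)"
    by (auto simp: sum_mat_def intro!: sum.cong)
  also have "\<dots> = (\<Sum>x\<in>S. sum_mat (F x))"
    using assms by (subst sum.swap) (auto simp: sum_mat_def intro!: sum.cong)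
  finally show ?thesis .
qed

lemma sum_mat_smult: "sum_mat (c \<cdot>\<^sub>m M) = c * sum_mat (M :: 'a :: comm_semiring_0 mat)"
  by (auto simp: sum_mat_def sum_distrib_left intro!: sum.cong)

lemma symmetric_idempotent_mat_eq:
  fixes P Q :: "'a :: comm_ring_1 mat"
  assumes P: "P \<in> carrier_mat n n" and Q: "Q \<in> carrier_mat n n"
    and PP: "P * P = P" and QQ: "Q * Q = Q"
    and tP: "transpose_mat P = P" and tQ: "transpose_mat Q = Q"
    and range: "(\<lambda>v. P *\<^sub>v v) ` carrier_vec n = (\<lambda>v. Q *\<^sub>v v) ` carrier_vec n"
  shows "P = Q"
proof -
  have absorb: "Y * X = X"
    if X: "X \<in> carrier_mat n n" and Y: "Y \<in> carrier_mat n n" and YY: "Y * Y = Y"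
      and XY: "(\<lambda>v. X *\<^sub>v v) ` carrier_vec n = (\<lambda>v. Y *\<^sub>v v) ` carrier_vec n" for X Y :: "'a mat"
  proof (rule mat_eq_by_mult_vec[of _ n n])
    fix v :: "'a vec" assume v: "v \<in> carrier_vec n"
    then obtain w where w: "w \<in> carrier_vec n" and Xv: "X *\<^sub>v v = Y *\<^sub>v w"
      using XY by blast
    have "(Y * X) *\<^sub>v v = (Y * Y) *\<^sub>v w"
      using X Y v w by (simp add: Xv)
    thus "(Y * X) *\<^sub>v v = X *\<^sub>v v"
      by (simp add: YY Xv)
  qed (use X Y in auto)
  have "P = transpose_mat (Q * P)"
    using absorb[OF P Q QQ range] tP by simp
  also have "\<dots> = P * Q"
    using P Q by (simp add: transpose_mult tP tQ)
  also have "\<dots> = Q"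
    by (rule absorb[OF Q P PP range[symmetric]])
  finally show ?thesis .
qed

(* The Lagrange interpolation polynomial of mu on the nodes ds, evaluated at A. *)
definition lagrange_proj :: "'a :: field mat \<Rightarrow> 'a list \<Rightarrow> 'a \<Rightarrow> 'a mat" where
  "lagrange_proj A ds mu = (1 / (\<Prod>x\<leftarrow>remove1 mu ds. mu - x)) \<cdot>\<^sub>m char_matrix_prod A (remove1 mu ds)"

context
  fixes A :: "real mat" and n :: nat and ds :: "real list"
  assumes A: "A \<in> carrier_mat n n" and sym: "transpose_mat A = A"
    and distinct: "distinct ds" and annihilates: "char_matrix_prod A ds = 0\<^sub>m n n"
begin

lemma lagrange_proj_carrier[simp]: "lagrange_proj A ds mu \<in> carrier_mat n n"
  using A by (simp add: lagrange_proj_def)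

lemma dim_lagrange_proj[simp]:
  "dim_row (lagrange_proj A ds mu) = n" "dim_col (lagrange_proj A ds mu) = n"
  using lagrange_proj_carrier[of mu] by (simp_all only: carrier_matD)

lemma lagrange_proj_mult_vec_carrier[simp]:
  "v \<in> carrier_vec n \<Longrightarrow> lagrange_proj A ds mu *\<^sub>v v \<in> carrier_vec n"
  by (simp add: mult_mat_vec_carrier[of _ n n])

lemma lagrange_proj_mult_vec:
  "v \<in> carrier_vec n \<Longrightarrow> lagrange_proj A ds mu *\<^sub>v v
     = (1 / (\<Prod>x\<leftarrow>remove1 mu ds. mu - x)) \<cdot>\<^sub>v (char_matrix_prod A (remove1 mu ds) *\<^sub>v v)"
  using A by (intro eq_vecI) (auto simp: lagrange_proj_def)

lemma lagrange_proj_eigenvector: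
  assumes mu: "mu \<in> set ds" and v: "v \<in> carrier_vec n"
  shows "A *\<^sub>v (lagrange_proj A ds mu *\<^sub>v v) = mu \<cdot>\<^sub>v (lagrange_proj A ds mu *\<^sub>v v)"
proof -
  let ?u = "char_matrix_prod A (remove1 mu ds) *\<^sub>v v"
  have "char_matrix A mu *\<^sub>v ?u = 0\<^sub>v n"
    using char_matrix_prod_Cons_mult_vec(1)[OF A v, of mu "remove1 mu ds"] v
    by (simp add: char_matrix_prod_remove1[OF A mu, symmetric] annihilates)
  hence "char_matrix A mu *\<^sub>v (lagrange_proj A ds mu *\<^sub>v v) = 0\<^sub>v n"
    using A v
    by (simp add: lagrange_proj_mult_vec mult_mat_vec[OF char_matrix_closed[OF A]] mult_mat_vec_carrier[of _ n n]
        vec_eq_iff)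
  thus ?thesis
    using A v by (simp add: char_matrix_mult_vec_eq_0_iff mult_mat_vec_carrier[of _ n n])
qed

lemma lagrange_proj_fixes_eigenvector:
  assumes mu: "mu \<in> set ds" and v: "v \<in> carrier_vec n" and ev: "A *\<^sub>v v = mu \<cdot>\<^sub>v v"
  shows "lagrange_proj A ds mu *\<^sub>v v = v"
proof -
  have "(\<Prod>x\<leftarrow>remove1 mu ds. mu - x) \<noteq> 0"
    using distinct by (auto simp: prod_list_zero_iff)
  thus ?thesis
    using v by (simp add: lagrange_proj_mult_vec char_matrix_prod_eigenvector[OF A v ev] vec_eq_iff)
qed

lemma lagrange_proj_kills_other_eigenvector:
  assumes mu: "mu \<in> set ds" and nu: "nu \<noteq> mu"
    and v: "v \<in> carrier_vec n" and ev: "A *\<^sub>v v = mu \<cdot>\<^sub>v v"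
  shows "lagrange_proj A ds nu *\<^sub>v v = 0\<^sub>v n"
proof -
  have "mu \<in> set (remove1 nu ds)"
    using mu nu by (simp add: in_set_remove1)
  hence "(\<Prod>x\<leftarrow>remove1 nu ds. mu - x) = 0"
    by (auto simp: prod_list_zero_iff)
  thus ?thesis
    using v by (simp add: lagrange_proj_mult_vec char_matrix_prod_eigenvector[OF A v ev] vec_eq_iff)
qed

lemma transpose_lagrange_proj: "transpose_mat (lagrange_proj A ds mu) = lagrange_proj A ds mu"
proof -
  have "transpose_mat (c \<cdot>\<^sub>m M) = c \<cdot>\<^sub>m transpose_mat M" for c and M :: "real mat"
    by (intro eq_matI) auto
  thus ?thesis
    by (simp add: lagrange_proj_def transpose_char_matrix_prod[OF A sym])
qed

lemma lagrange_proj_idempotent: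
  assumes mu: "mu \<in> set ds"
  shows "lagrange_proj A ds mu * lagrange_proj A ds mu = lagrange_proj A ds mu"
  using lagrange_proj_fixes_eigenvector[OF mu _ lagrange_proj_eigenvector[OF mu]]
  by (intro mat_eq_by_mult_vec[of _ n n]) (auto simp: assoc_mult_mat_vec[of _ n n _ n])

lemma lagrange_proj_orthogonal:
  assumes mu: "mu \<in> set ds" and nu: "nu \<noteq> mu"
  shows "lagrange_proj A ds nu * lagrange_proj A ds mu = 0\<^sub>m n n"
  using lagrange_proj_kills_other_eigenvector[OF mu nu _ lagrange_proj_eigenvector[OF mu]]
  by (intro mat_eq_by_mult_vec[of _ n n]) (auto simp: assoc_mult_mat_vec[of _ n n _ n])

lemma range_lagrange_proj:
  assumes mu: "mu \<in> set ds"
  shows "(\<lambda>v. lagrange_proj A ds mu *\<^sub>v v) ` carrier_vec n = eigenspace A mu"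
proof
  show "(\<lambda>v. lagrange_proj A ds mu *\<^sub>v v) ` carrier_vec n \<subseteq> eigenspace A mu"
    using A lagrange_proj_eigenvector[OF mu] by (auto simp: eigenspace_def)
  show "eigenspace A mu \<subseteq> (\<lambda>v. lagrange_proj A ds mu *\<^sub>v v) ` carrier_vec n"
  proof
    fix v assume "v \<in> eigenspace A mu"
    with A have "v \<in> carrier_vec n" and "lagrange_proj A ds mu *\<^sub>v v = v"
      using lagrange_proj_fixes_eigenvector[OF mu] by (auto simp: eigenspace_def)
    thus "v \<in> (\<lambda>v. lagrange_proj A ds mu *\<^sub>v v) ` carrier_vec n"
      by (metis image_eqI)
  qed
qed

lemma eig_proj_eq_lagrange_proj:
  assumes mu: "mu \<in> set ds"
  shows "eig_proj A mu = lagrange_proj A ds mu"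
proof -
  have n: "dim_row A = n"
    using A by simp
  show ?thesis
    unfolding eig_proj_def n
  proof (rule the_equality)
    show "lagrange_proj A ds mu \<in> carrier_mat n n \<and>
        lagrange_proj A ds mu * lagrange_proj A ds mu = lagrange_proj A ds mu \<and>
        transpose_mat (lagrange_proj A ds mu) = lagrange_proj A ds mu \<and>
        (\<lambda>v. lagrange_proj A ds mu *\<^sub>v v) ` carrier_vec n = eigenspace A mu"
      using lagrange_proj_idempotent[OF mu] transpose_lagrange_proj range_lagrange_proj[OF mu] by simp
    fix P
    assume "P \<in> carrier_mat n n \<and> P * P = P \<and> transpose_mat P = P \<and>
        (\<lambda>v. P *\<^sub>v v) ` carrier_vec n = eigenspace A mu"
    hence P: "P \<in> carrier_mat n n" "P * P = P" "transpose_mat P = P"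
      and range: "(\<lambda>v. P *\<^sub>v v) ` carrier_vec n = (\<lambda>v. lagrange_proj A ds mu *\<^sub>v v) ` carrier_vec n"
      using range_lagrange_proj[OF mu] by simp_all
    show "P = lagrange_proj A ds mu"
      by (rule symmetric_idempotent_mat_eq[OF P(1) lagrange_proj_carrier P(2)
            lagrange_proj_idempotent[OF mu] P(3) transpose_lagrange_proj range])
  qed
qed

lemma lagrange_proj_mult_sum:
  assumes nu: "nu \<in> set ds"
  shows "lagrange_proj A ds nu * mat_sum n (set ds) (lagrange_proj A ds) = lagrange_proj A ds nu"
proof -
  have "lagrange_proj A ds nu * mat_sum n (set ds) (lagrange_proj A ds)
      = mat_sum n (set ds) (\<lambda>mu. lagrange_proj A ds nu * lagrange_proj A ds mu)"
    by (simp add: mult_mat_sum)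
  also have "\<dots> = mat_sum n (set ds) (\<lambda>mu. if mu = nu then lagrange_proj A ds nu else 0\<^sub>m n n)"
    using lagrange_proj_idempotent[OF nu] lagrange_proj_orthogonal by (intro mat_sum_cong) auto
  also have "\<dots> = lagrange_proj A ds nu"
    using nu by (simp add: mat_sum_delta)
  finally show ?thesis .
qed

lemma sum_lagrange_proj: "mat_sum n (set ds) (lagrange_proj A ds) = 1\<^sub>m n"
proof (rule mat_eq_by_mult_vec[of _ n n])
  fix v :: "real vec" assume v: "v \<in> carrier_vec n"
  let ?S = "mat_sum n (set ds) (lagrange_proj A ds)"
  let ?w = "v - ?S *\<^sub>v v"
  have Sv: "?S *\<^sub>v v \<in> carrier_vec n" and w: "?w \<in> carrier_vec n"
    using v by (simp_all add: mult_mat_vec_carrier[of _ n n])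
  have "char_matrix_prod A (remove1 nu ds) *\<^sub>v ?w = 0\<^sub>v n" if nu: "nu \<in> set ds" for nu
  proof -
    have "lagrange_proj A ds nu *\<^sub>v ?w = lagrange_proj A ds nu *\<^sub>v v - (lagrange_proj A ds nu * ?S) *\<^sub>v v"
      using v Sv by (simp add: mult_minus_distrib_mat_vec[of _ n n] assoc_mult_mat_vec[of _ n n _ n])
    hence "lagrange_proj A ds nu *\<^sub>v ?w = 0\<^sub>v n"
      using v by (simp add: lagrange_proj_mult_sum[OF nu])
    moreover have "(\<Prod>x\<leftarrow>remove1 nu ds. nu - x) \<noteq> 0"
      using distinct by (auto simp: prod_list_zero_iff)
    ultimately show ?thesis
      using w by (auto simp: lagrange_proj_mult_vec vec_eq_iff)
  qed
  moreover have "char_matrix_prod A ds *\<^sub>v ?w = 0\<^sub>v n"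
    using w by (simp add: annihilates)
  ultimately have "?w = 0\<^sub>v n"
    using eq_0_if_char_matrix_prod_remove1_eq_0[OF A distinct w] by blast
  with v Sv show "?S *\<^sub>v v = 1\<^sub>m n *\<^sub>v v"
    by (auto simp: vec_eq_iff)
qed auto

lemma char_matrix_mult_lagrange_proj:
  assumes mu: "mu \<in> set ds"
  shows "char_matrix A e * lagrange_proj A ds mu = (mu - e) \<cdot>\<^sub>m lagrange_proj A ds mu"
  using A lagrange_proj_eigenvector[OF mu]
  by (intro mat_eq_by_mult_vec[of _ n n])
    (auto simp: assoc_mult_mat_vec[of _ n n _ n] smult_mat_mult_vec[of _ n n] char_matrix_mult_vec
      vec_eq_iff algebra_simps)

lemma char_matrix_mult_resolvent:
  assumes e: "e \<notin> set ds"
  shows "char_matrix A e * mat_sum n (set ds) (\<lambda>mu. (1 / (mu - e)) \<cdot>\<^sub>m lagrange_proj A ds mu) = 1\<^sub>m n"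
proof -
  have "char_matrix A e * mat_sum n (set ds) (\<lambda>mu. (1 / (mu - e)) \<cdot>\<^sub>m lagrange_proj A ds mu)
      = mat_sum n (set ds) (\<lambda>mu. char_matrix A e * ((1 / (mu - e)) \<cdot>\<^sub>m lagrange_proj A ds mu))"
    using A by (intro mult_mat_sum) auto
  also have "\<dots> = mat_sum n (set ds) (lagrange_proj A ds)"
  proof (rule mat_sum_cong)
    fix mu assume mu: "mu \<in> set ds"
    hence "mu - e \<noteq> 0"
      using e by auto
    thus "char_matrix A e * ((1 / (mu - e)) \<cdot>\<^sub>m lagrange_proj A ds mu) = lagrange_proj A ds mu"
      by (simp add: mult_smult_distrib[OF char_matrix_closed[OF A] lagrange_proj_carrier]
          char_matrix_mult_lagrange_proj[OF mu]) (auto intro: eq_matI)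
  qed
  also have "\<dots> = 1\<^sub>m n"
    by (rule sum_lagrange_proj)
  finally show ?thesis .
qed

lemma det_char_matrix_minus_all_ones:
  assumes e: "e \<notin> set ds"
  shows "det (char_matrix A e - mat n n (\<lambda>_. 1))
    = det (char_matrix A e) * (1 - (\<Sum>mu\<in>set ds. sum_mat (eig_proj A mu) / (mu - e)))"
proof -
  let ?R = "mat_sum n (set ds) (\<lambda>mu. (1 / (mu - e)) \<cdot>\<^sub>m lagrange_proj A ds mu)"
  have "sum_mat ?R = (\<Sum>mu\<in>set ds. sum_mat (eig_proj A mu) / (mu - e))"
    using A by (simp add: sum_mat_mat_sum sum_mat_smult eig_proj_eq_lagrange_proj)
  thus ?thesis
    using det_minus_all_ones_mat[OF char_matrix_closed[OF A] mat_sum_carrier char_matrix_mult_resolvent[OF e]]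
    by simp
qed

end

section \<open>Graphs\<close>

lemma proots_prod_linear_factors: "proots (\<Prod>e\<leftarrow>es. [:-e, 1:]) = mset es"
proof (induction es)
  case (Cons e es)
  have "(\<Prod>e\<leftarrow>es. [:-e, 1:]) \<noteq> 0"
    by (auto simp: prod_list_zero_iff)
  with Cons.IH show ?case
    by (simp add: proots_mult del: mult_pCons_left)
qed simp

lemma poly_eq_if_eq_cofinite:
  fixes p q :: "'a :: {idom, ring_char_0} poly"
  assumes "finite S" and "\<And>t. t \<notin> S \<Longrightarrow> poly p t = poly q t"
  shows "p = q"
proof (rule ccontr)
  assume "p \<noteq> q"
  hence "finite {t. poly (p - q) t = 0}"
    by (intro poly_roots_finite) simp
  moreover have "UNIV \<subseteq> S \<union> {t. poly (p - q) t = 0}"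
    using assms(2) by auto
  ultimately show False
    using assms(1) infinite_UNIV_char_0 by (meson finite_UnI finite_subset)
qed

lemma distinct_distinct_eigs: "distinct (distinct_eigs n E)"
  by (simp add: distinct_eigs_def)

context
  fixes n :: nat and E :: "nat \<Rightarrow> nat \<Rightarrow> bool"
  assumes G: "simple_graph n E"
begin

lemma adj_mat_carrier: "adj_mat n E \<in> carrier_mat n n"
  by (simp add: adj_mat_def)

lemma transpose_adj_mat: "transpose_mat (adj_mat n E) = adj_mat n E"
  using G by (intro eq_matI) (auto simp: adj_mat_def simple_graph_def)

lemma char_poly_adj_mat_Spec:
  "char_poly (adj_mat n E) = prod_mset (image_mset (\<lambda>e. [:-e, 1:]) (Spec n E))"
proof -
  obtain es where es: "char_poly (adj_mat n E) = (\<Prod>e\<leftarrow>es. [:-e, 1:])"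
    using char_poly_real_symmetric_splits[OF adj_mat_carrier transpose_adj_mat] .
  hence "Spec n E = mset es"
    by (simp add: Spec_def proots_prod_linear_factors)
  with es show ?thesis
    by (simp add: prod_mset_prod_list flip: mset_map)
qed

lemma distinct_eigs_annihilate: "char_matrix_prod (adj_mat n E) (distinct_eigs n E) = 0\<^sub>m n n"
proof -
  obtain es where es: "char_poly (adj_mat n E) = (\<Prod>e\<leftarrow>es. [:-e, 1:])"
    using char_poly_real_symmetric_splits[OF adj_mat_carrier transpose_adj_mat] .
  hence "distinct_eigs n E = sorted_list_of_set (set es)"
    by (simp add: distinct_eigs_def Spec_def proots_prod_linear_factors)
  with es show ?thesis
    using char_matrix_prod_distinct_roots[OF adj_mat_carrier transpose_adj_mat] by simp
qed

lemma eig_proj_adj_mat_carrier: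
  "mu \<in> set (distinct_eigs n E) \<Longrightarrow> eig_proj (adj_mat n E) mu \<in> carrier_mat n n"
  using eig_proj_eq_lagrange_proj[OF adj_mat_carrier transpose_adj_mat distinct_distinct_eigs
      distinct_eigs_annihilate]
    lagrange_proj_carrier[OF adj_mat_carrier transpose_adj_mat distinct_distinct_eigs
      distinct_eigs_annihilate]
  by simp

lemma poly_char_poly_compl_graph:
  assumes t: "- (t + 1) \<notin> set (distinct_eigs n E)"
  shows "poly (char_poly (adj_mat n (compl_graph E))) t
    = (-1) ^ n * poly (char_poly (adj_mat n E)) (- (t + 1))
      * (1 - (\<Sum>mu\<in>set (distinct_eigs n E). sum_mat (eig_proj (adj_mat n E) mu) / (mu + (t + 1))))"
proof -
  let ?A = "adj_mat n E"
  \<comment> \<open>the complement has adjacency matrix J - I - A\<close>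
  have "- char_matrix (adj_mat n (compl_graph E)) t = char_matrix ?A (- (t + 1)) - mat n n (\<lambda>_. 1)"
    using G by (intro eq_matI) (auto simp: char_matrix_def adj_mat_def compl_graph_def simple_graph_def)
  hence "poly (char_poly (adj_mat n (compl_graph E))) t = det (char_matrix ?A (- (t + 1)) - mat n n (\<lambda>_. 1))"
    by (simp add: char_poly_matrix[of _ n] adj_mat_def)
  also have "\<dots> = det (char_matrix ?A (- (t + 1)))
      * (1 - (\<Sum>mu\<in>set (distinct_eigs n E). sum_mat (eig_proj ?A mu) / (mu - - (t + 1))))"
    by (rule det_char_matrix_minus_all_ones[OF adj_mat_carrier transpose_adj_mat distinct_distinct_eigs
          distinct_eigs_annihilate t])
  finally show ?thesis
    by (simp add: det_char_matrix[OF adj_mat_carrier] algebra_simps)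
qed

lemma sum_mat_eig_proj_F_weak:
  assumes k: "k < length (distinct_eigs n E)"
  shows "sum_mat (eig_proj (adj_mat n E) (distinct_eigs n E ! k))
    = (\<Sum>(_, ys)\<in>#snd (F_weak n E). \<Sum>y\<in>#ys. y ! k)"
proof -
  have "(\<Sum>(_, ys)\<in>#snd (F_weak n E). \<Sum>y\<in>#ys. y ! k) = (\<Sum>x<n. \<Sum>y<n. Pstar n E x y ! k)"
    by (simp add: F_weak_def image_mset.compositionality comp_def lessThan_atLeast0
        flip: sum_unfold_sum_mset)
  also have "\<dots> = sum_mat (eig_proj (adj_mat n E) (distinct_eigs n E ! k))"
  proof -
    have "eig_proj (adj_mat n E) (distinct_eigs n E ! k) \<in> carrier_mat n n"
      using k by (simp add: eig_proj_adj_mat_carrier)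
    thus ?thesis
      using k by (simp add: Pstar_def sum_mat_def sum.cartesian_product lessThan_atLeast0 case_prod_beta')
  qed
  finally show ?thesis ..
qed

end

lemma sum_mat_eig_proj_eq_if_F_weak_eq:
  assumes G: "simple_graph n E" and H: "simple_graph n F" and eq: "F_weak n E = F_weak n F"
    and mu: "mu \<in> set (distinct_eigs n E)"
  shows "sum_mat (eig_proj (adj_mat n E) mu) = sum_mat (eig_proj (adj_mat n F) mu)"
proof -
  obtain k where k: "k < length (distinct_eigs n E)" and mu_k: "mu = distinct_eigs n E ! k"
    using mu unfolding in_set_conv_nth by blast
  have "distinct_eigs n E = distinct_eigs n F"
    using arg_cong[OF eq, of fst] by (simp add: F_weak_def distinct_eigs_def)
  thus ?thesis
    using sum_mat_eig_proj_F_weak[OF G k] sum_mat_eig_proj_F_weak[OF H, of k] k eq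
    by (simp add: mu_k)
qed

lemma Spec_compl_graph_eq_if_F_weak_eq:
  assumes G: "simple_graph n E" and H: "simple_graph n F" and eq: "F_weak n E = F_weak n F"
  shows "Spec n (compl_graph E) = Spec n (compl_graph F)"
proof -
  have "Spec n E = Spec n F"
    using arg_cong[OF eq, of fst] by (simp add: F_weak_def)
  hence ds: "distinct_eigs n E = distinct_eigs n F"
    and cp: "char_poly (adj_mat n E) = char_poly (adj_mat n F)"
    by (simp_all add: distinct_eigs_def char_poly_adj_mat_Spec[OF G] char_poly_adj_mat_Spec[OF H])
  have "char_poly (adj_mat n (compl_graph E)) = char_poly (adj_mat n (compl_graph F))"
  proof (rule poly_eq_if_eq_cofinite)
    show "finite ((\<lambda>mu. - mu - 1) ` set (distinct_eigs n E))"
      by simp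
    fix t assume t_notin: "t \<notin> (\<lambda>mu. - mu - 1) ` set (distinct_eigs n E)"
    have t: "- (t + 1) \<notin> set (distinct_eigs n E)"
    proof
      assume "- (t + 1) \<in> set (distinct_eigs n E)"
      hence "- (- (t + 1)) - 1 \<in> (\<lambda>mu. - mu - 1) ` set (distinct_eigs n E)"
        by (rule imageI)
      with t_notin show False
        by simp
    qed
    have "(\<Sum>mu\<in>set (distinct_eigs n E). sum_mat (eig_proj (adj_mat n E) mu) / (mu + (t + 1)))
        = (\<Sum>mu\<in>set (distinct_eigs n F). sum_mat (eig_proj (adj_mat n F) mu) / (mu + (t + 1)))"
      unfolding ds[symmetric]
      by (rule sum.cong) (simp_all add: sum_mat_eig_proj_eq_if_F_weak_eq[OF G H eq])
    moreover have "- (t + 1) \<notin> set (distinct_eigs n F)"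
      using t by (simp add: ds)
    ultimately show "poly (char_poly (adj_mat n (compl_graph E))) t
        = poly (char_poly (adj_mat n (compl_graph F))) t"
      by (simp add: poly_char_poly_compl_graph[OF G t] poly_char_poly_compl_graph[OF H] cp)
  qed
  thus ?thesis
    by (simp add: Spec_def)
qed

theorem theorem5p4:
  fixes n m :: nat and E F :: "nat \<Rightarrow> nat \<Rightarrow> bool"
  assumes "simple_graph n E" and "simple_graph m F"
    and "F_weak n E = F_weak m F"
  shows "Spec n E = Spec m F \<and> Spec n (compl_graph E) = Spec m (compl_graph F)"
proof -
  have n: "n = m"
    using arg_cong[OF assms(3), of "\<lambda>x. size (snd x)"] by (simp add: F_weak_def)
  have "Spec n E = Spec m F"
    using arg_cong[OF assms(3), of fst] by (simp add: F_weak_def)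
  moreover have "Spec n (compl_graph E) = Spec m (compl_graph F)"
    using Spec_compl_graph_eq_if_F_weak_eq[of n E F] assms unfolding n by blast
  ultimately show ?thesis ..
qed

end
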